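(* Let $p$ be an odd prime and let $G_{g\,\mathsf{ANY},\,h\,\mathsf{ANY}}(p)$ denote the number of integers $h$ with $1\le h\le p-1$ for which there exists an integer $g$ with $1\le g\le p-1$ and $g^{h}\equiv h\pmod p$. Then \[ \left|G_{g\,\mathsf{ANY},\,h\,\mathsf{ANY}}(p)-\sum_{e\mid p-1}\frac{1}{e}\,\phi\!\left(\frac{p-1}{e}\right)\right|\le d(p-1)^{2}\sqrt{p}\,(1+\ln p). \]
   Context: $\phi$ is Euler's totient function, $d(n)$ denotes the number of positive divisors of $n$, the sum runs over positive divisors $e$ of $p-1$, and $\ln$ is the natural logarithm. *)

theory Defs
  imports "HOL-Analysis.Analysis" "HOL-Number_Theory.Number_Theory"
begin

definition G_any_any :: "nat \<Rightarrow> nat" where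
  "G_any_any p = card {h \<in> {1..p-1}. \<exists>g \<in> {1..p-1}. [g ^ h = h] (mod p)}"

definition num_divisors :: "nat \<Rightarrow> nat" where
  "num_divisors n = card {d. d dvd n}"

end

theory Submission
  imports Defs
begin

(* Let n = p - 1 and d = gcd h n. The h-th powers modulo p are exactly the d-th powers, i.e. the
   subgroup H of (n/d)-th roots of unity, so h is counted iff h lies in H. Sorting the h by d and
   removing the condition gcd (h/d) (n/d) = 1 by inclusion-exclusion over the prime factors of n/d
   reduces the count to at most d(n)^2 counts of arithmetic progressions {D, 2D, ..., (n/D) D}
   inside such subgroups. Each of these is (n/D) card H / p up to sqrt p (1 + ln p) by Fourier
   analysis modulo p: the exponential sums over H are at most sqrt p at nonzero frequencies, and
   the incomplete geometric sums over the progression sum up to at most p (1 + ln p). The main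
   terms recombine into the sum of totient (n/e) / e. *)

section \<open>Additive characters and incomplete geometric sums\<close>

definition addchar :: "nat \<Rightarrow> int \<Rightarrow> complex" where
  "addchar n t = exp (2 * of_real pi * \<i> * of_int t / of_nat n)"

definition expsum :: "nat \<Rightarrow> nat set \<Rightarrow> nat \<Rightarrow> complex" where
  "expsum n A a = (\<Sum>x\<in>A. addchar n (int a * int x))"

lemma addchar_add: "addchar n (s + t) = addchar n s * addchar n t"
  by (simp add: addchar_def distrib_left add_divide_distrib exp_add)

lemma norm_addchar [simp]: "norm (addchar n t) = 1"
  by (simp add: addchar_def)

lemma addchar_0 [simp]: "addchar n 0 = 1"
  by (simp add: addchar_def)

lemma cnj_addchar: "cnj (addchar n t) = addchar n (- t)"
  by (simp add: addchar_def exp_cnj)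

lemma addchar_power: "addchar n t ^ k = addchar n (int k * t)"
proof -
  have "addchar n t ^ k = exp (of_nat k * (2 * of_real pi * \<i> * of_int t / of_nat n))"
    by (simp add: addchar_def exp_of_nat_mult[symmetric])
  also have "\<dots> = addchar n (int k * t)" by (simp add: addchar_def field_simps)
  finally show ?thesis .
qed

lemma addchar_eq_cis: "addchar n t = cis (2 * pi * t / n)"
  by (simp add: addchar_def cis_conv_exp mult_ac)

lemma addchar_eq_1_iff:
  assumes "n > 0"
  shows "addchar n t = 1 \<longleftrightarrow> int n dvd t"
proof
  assume "addchar n t = 1"
  then obtain k :: int where "Im (2 * of_real pi * \<i> * of_int t / of_nat n) = 2 * pi * k"
    by (auto simp: addchar_def exp_eq_1)
  hence "real_of_int t = n * k" using assms by (simp add: field_simps)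
  hence "t = int n * k" by (metis of_int_eq_iff of_int_mult of_int_of_nat_eq)
  thus "int n dvd t" by simp
next
  assume "int n dvd t"
  then obtain k where "t = int n * k" ..
  hence "2 * of_real pi * \<i> * of_int t / of_nat n = 2 * of_real pi * \<i> * of_int k"
    using assms by (simp add: field_simps)
  thus "addchar n t = 1" by (simp add: addchar_def exp_eq_1)
qed

lemma addchar_cong:
  assumes "n > 0" "[s = t] (mod int n)"
  shows "addchar n s = addchar n t"
proof -
  obtain k where "s = t + int n * k"
    using assms(2) by (metis cong_iff_lin cong_sym)
  thus ?thesis by (simp add: addchar_add addchar_eq_1_iff[OF assms(1)])
qed

lemma sum_addchar_multiples:
  assumes "n > 0"
  shows "(\<Sum>a<n. addchar n (int a * t)) = (if int n dvd t then of_nat n else 0)"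
proof (cases "int n dvd t")
  case True
  hence "addchar n (int a * t) = 1" for a using assms by (simp add: addchar_eq_1_iff)
  thus ?thesis using True by simp
next
  case False
  define w where "w = addchar n t"
  have "w \<noteq> 1" using False assms by (simp add: w_def addchar_eq_1_iff)
  moreover have "w ^ n = 1" using assms by (simp add: w_def addchar_power addchar_eq_1_iff)
  ultimately have "(\<Sum>a<n. w ^ a) = 0" by (simp add: sum_gp_strict)
  thus ?thesis using False by (simp add: w_def addchar_power)
qed

lemma norm_1_minus_addchar:
  assumes "0 < b" "b < int n"
  shows "norm (1 - addchar n b) = 2 * sin (pi * b / n)"
proof -
  define x where "x = pi * b / n"
  have "0 < x" "x < pi" using assms by (auto simp: x_def field_simps)
  hence "sin x > 0" by (simp add: sin_gt_zero)
  have "addchar n b = cis (2 * x)" by (simp add: addchar_eq_cis x_def mult.assoc)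
  hence "(norm (1 - addchar n b))\<^sup>2 = (1 - cos (2 * x))\<^sup>2 + (sin (2 * x))\<^sup>2"
    by (simp add: cmod_power2)
  also have "\<dots> = 2 - 2 * cos (2 * x)"
    using sin_cos_squared_add[of "2 * x"] by (simp add: power2_eq_square algebra_simps)
  also have "\<dots> = (2 * sin x)\<^sup>2" by (simp add: cos_double_sin power2_eq_square)
  finally have "norm (1 - addchar n b) = 2 * sin x"
    using \<open>sin x > 0\<close> power2_eq_iff_nonneg[of "norm (1 - addchar n b)" "2 * sin x"] by simp
  thus ?thesis by (simp add: x_def)
qed

lemma expsum_mod:
  assumes "n > 0"
  shows "expsum n A (a mod n) = expsum n A a"
  unfolding expsum_def
  by (intro sum.cong refl addchar_cong assms) (auto simp: cong_def mod_mult_left_eq zmod_int)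

lemma jordan_inequality:
  fixes x :: real
  assumes "0 \<le> x" "x \<le> pi / 2"
  shows "2 / pi * x \<le> sin x"
proof -
  have "convex_on {0..pi/2} (\<lambda>x. - sin x)"
  proof (rule convex_on_realI[where f'="\<lambda>x. - cos x"])
    show "((\<lambda>x. - sin x) has_real_derivative - cos x) (at x)" for x
      by (auto intro!: derivative_eq_intros)
    show "- cos x \<le> - cos y" if "x \<in> {0..pi/2}" "y \<in> {0..pi/2}" "x \<le> y" for x y
      using that by (auto intro!: cos_monotone_0_pi_le)
  qed simp
  moreover define t where "t = x / (pi / 2)"
  moreover have "0 \<le> t" "t \<le> 1" using assms by (auto simp: t_def field_simps)
  ultimately have "- sin ((1 - t) *\<^sub>R 0 + t *\<^sub>R (pi / 2)) \<le> (1 - t) * (- sin 0) + t * (- sin (pi / 2))"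
    by (intro convex_onD) auto
  moreover have "(1 - t) *\<^sub>R 0 + t *\<^sub>R (pi / 2) = x" by (simp add: t_def)
  ultimately show ?thesis by (simp add: t_def field_simps)
qed

lemma sin_pi_div_ge:
  fixes c p :: real
  assumes "0 < c" "c < p"
  shows "2 * min c (p - c) / p \<le> sin (pi * c / p)"
proof (cases "2 * c \<le> p")
  case True
  have "2 / pi * (pi * c / p) \<le> sin (pi * c / p)"
    using True assms by (intro jordan_inequality) (auto simp: field_simps)
  thus ?thesis using True by (simp add: min_def)
next
  case False
  have "pi * c / p = pi - pi * (p - c) / p" using assms by (simp add: field_simps)
  hence "sin (pi * c / p) = sin (pi * (p - c) / p)" by simp
  moreover have "2 / pi * (pi * (p - c) / p) \<le> sin (pi * (p - c) / p)"
    using False assms by (intro jordan_inequality) (auto simp: field_simps)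
  ultimately show ?thesis using False by (simp add: min_def)
qed

lemma norm_geometric_sum_le:
  fixes w :: complex
  assumes "w \<noteq> 1" "norm w = 1"
  shows "norm (\<Sum>y\<in>{1..N}. w ^ y) \<le> 2 / norm (1 - w)"
proof -
  have "(\<Sum>y\<in>{1..N}. w ^ y) = (\<Sum>y<N. w ^ Suc y)"
    by (rule sum.reindex_bij_witness[of _ Suc "\<lambda>y. y - 1"]) auto
  also have "\<dots> = w * ((1 - w ^ N) / (1 - w))"
    using assms by (simp add: sum_gp_strict flip: sum_distrib_left)
  finally have eq: "(\<Sum>y\<in>{1..N}. w ^ y) = w * ((1 - w ^ N) / (1 - w))" .
  have "norm (1 - w ^ N) \<le> 2"
    using norm_triangle_ineq4[of 1 "w ^ N"] assms by (simp add: norm_power)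
  thus ?thesis using assms unfolding eq
    by (simp add: norm_mult norm_divide divide_right_mono)
qed

lemma norm_expsum_interval_le:
  assumes "0 < c" "c < n"
  shows "norm (expsum n {1..N} c) \<le> 1 / sin (pi * c / n)"
proof -
  have "expsum n {1..N} c = (\<Sum>y\<in>{1..N}. addchar n c ^ y)"
    by (simp add: expsum_def addchar_power mult.commute)
  also have "norm \<dots> \<le> 2 / norm (1 - addchar n c)"
    using assms by (intro norm_geometric_sum_le) (auto simp: addchar_eq_1_iff zdvd_not_zless)
  also have "\<dots> = 1 / sin (pi * c / n)" using norm_1_minus_addchar[of c n] assms by simp
  finally show ?thesis .
qed

lemma harm_le_1_plus_ln:
  assumes "m \<ge> 1"
  shows "harm m \<le> 1 + ln (real m)"
  using assms
proof (induction m rule: dec_induct)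
  case base
  then show ?case by (simp add: harm_def)
next
  case (step k)
  have "ln (real k / real (Suc k)) = ln (1 + (- 1 / real (Suc k)))"
    using step by (simp add: field_simps)
  also have "\<dots> \<le> - 1 / real (Suc k)"
    by (rule ln_add_one_self_le_self2) (use step in \<open>auto simp: field_simps\<close>)
  finally have "ln (real k) - ln (real (Suc k)) \<le> - 1 / real (Suc k)"
    using step by (simp add: ln_div)
  moreover have "harm (Suc k) = harm k + 1 / real (Suc k)"
    by (simp add: harm_Suc divide_inverse)
  ultimately show ?case using step by linarith
qed

lemma sum_inverse_sin_le_harm:
  fixes p :: nat
  assumes "odd p"
  shows "(\<Sum>c\<in>{1..<p}. 1 / sin (pi * c / p)) \<le> p * harm (p div 2)"
proof -
  obtain m where pm: "p = 2 * m + 1" using assms oddE by blast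
  have le: "1 / sin (pi * c / p) \<le> p / (2 * min c (p - c))" if "c \<in> {1..<p}" for c
  proof -
    have "min (real c) (real p - real c) = real (min c (p - c))" using that by auto
    hence "2 * real (min c (p - c)) / p \<le> sin (pi * c / p)"
      using sin_pi_div_ge[of c p] that by simp
    moreover have "0 < 2 * real (min c (p - c)) / p" using that by auto
    ultimately have "1 / sin (pi * c / p) \<le> 1 / (2 * real (min c (p - c)) / p)"
      by (intro frac_le) auto
    thus ?thesis by simp
  qed
  have "(\<Sum>c\<in>{1..<p}. 1 / sin (pi * c / p)) \<le> (\<Sum>c\<in>{1..<p}. p / (2 * min c (p - c)))"
    by (intro sum_mono le)
  also have "\<dots> = (\<Sum>c\<in>{1..m}. p / (2 * min c (p - c))) + (\<Sum>c\<in>{m+1..2*m}. p / (2 * min c (p - c)))"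
  proof -
    have "{1..<p} = {1..m} \<union> {m+1..2*m}" using pm by auto
    thus ?thesis by (simp add: sum.union_disjoint)
  qed
  also have "(\<Sum>c\<in>{1..m}. p / (2 * min c (p - c))) = (\<Sum>c\<in>{1..m}. p / (2 * c))"
    using pm by (intro sum.cong) auto
  also have "(\<Sum>c\<in>{m+1..2*m}. p / (2 * min c (p - c))) = (\<Sum>c\<in>{1..m}. p / (2 * c))"
    using pm by (intro sum.reindex_bij_witness[of _ "\<lambda>c. p - c" "\<lambda>c. p - c"]) auto
  also have "(\<Sum>c\<in>{1..m}. p / (2 * c)) + (\<Sum>c\<in>{1..m}. p / (2 * c)) = p * harm m"
    by (simp add: harm_def sum_distrib_left field_simps flip: sum.distrib)
  finally show ?thesis using pm by simp
qed

(* The slack sqrt p leaves room for the error 1 made in card_progression_inter_unit_roots. *)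
lemma sum_inverse_sin_le:
  fixes p :: nat
  assumes "odd p" "p \<ge> 3"
  shows "(\<Sum>c\<in>{1..<p}. 1 / sin (pi * c / p)) \<le> p * (1 + ln p) - sqrt p"
proof -
  define m where "m = p div 2"
  have "m \<ge> 1" "p = 2 * m + 1" using assms by (auto simp: m_def elim!: oddE)
  have "(\<Sum>c\<in>{1..<p}. 1 / sin (pi * c / p)) \<le> p * harm m"
    unfolding m_def by (rule sum_inverse_sin_le_harm[OF assms(1)])
  also have "\<dots> \<le> p * (1 + ln m)"
    using harm_le_1_plus_ln[OF \<open>m \<ge> 1\<close>] by (intro mult_left_mono) auto
  also have "\<dots> \<le> p * (1 + ln p) - sqrt p"
  proof -
    have "ln 2 \<le> ln (p / m)"
      using \<open>m \<ge> 1\<close> \<open>p = 2 * m + 1\<close> by (subst ln_le_cancel_iff) (auto simp: field_simps)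
    hence "2 / 3 \<le> ln p - ln m" using ln2_ge_two_thirds \<open>m \<ge> 1\<close> \<open>p = 2 * m + 1\<close> by (simp add: ln_div)
    hence "p * (2 / 3) \<le> p * (ln p - ln m)" by (intro mult_left_mono) auto
    moreover have "3 / 2 \<le> sqrt p"
      using assms by (intro real_le_rsqrt) (auto simp: power2_eq_square)
    hence "sqrt p * (3 / 2) \<le> sqrt p * sqrt p" by (intro mult_left_mono) auto
    ultimately show ?thesis by (simp add: algebra_simps)
  qed
  finally show ?thesis .
qed

lemma bij_betw_mult_mod_prime:
  fixes p k :: nat
  assumes "prime p" "\<not> p dvd k"
  shows "bij_betw (\<lambda>a. (k * a) mod p) {1..<p} {1..<p}"
proof -
  have "coprime k p" using prime_imp_coprime[OF assms] by (simp add: coprime_commute)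
  hence inj: "inj_on (\<lambda>a. (k * a) mod p) {1..<p}"
    by (auto simp: inj_on_def cong_def[symmetric] cong_mult_lcancel_nat
             dest: cong_less_modulus_unique_nat)
  moreover have "(\<lambda>a. (k * a) mod p) ` {1..<p} \<subseteq> {1..<p}"
  proof
    fix c assume "c \<in> (\<lambda>a. (k * a) mod p) ` {1..<p}"
    then obtain a where a: "a \<in> {1..<p}" "c = (k * a) mod p" by blast
    have "\<not> p dvd a" using a by (auto dest: dvd_imp_le)
    hence "\<not> p dvd k * a" using assms prime_dvd_mult_iff by blast
    thus "c \<in> {1..<p}" using a assms(1) by (auto simp: dvd_eq_mod_eq_0 prime_gt_0_nat)
  qed
  ultimately show ?thesis by (simp add: bij_betw_def endo_inj_surj)
qed

lemma sum_norm_expsum_interval_le: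
  fixes p D :: nat
  assumes "prime p" "odd p" "\<not> p dvd D"
  shows "(\<Sum>a\<in>{1..<p}. norm (expsum p {1..N} (a * D))) \<le> p * (1 + ln p) - sqrt p"
proof -
  have "p \<ge> 3" using assms prime_ge_2_nat[OF assms(1)] by (cases "p = 2") auto
  have "(\<Sum>a\<in>{1..<p}. norm (expsum p {1..N} (a * D)))
      = (\<Sum>a\<in>{1..<p}. norm (expsum p {1..N} ((D * a) mod p)))"
    using \<open>p \<ge> 3\<close> by (simp add: expsum_mod mult.commute)
  also have "\<dots> = (\<Sum>c\<in>{1..<p}. norm (expsum p {1..N} c))"
    using sum.reindex_bij_betw[OF bij_betw_mult_mod_prime[OF assms(1,3)]] .
  also have "\<dots> \<le> (\<Sum>c\<in>{1..<p}. 1 / sin (pi * c / p))"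
    by (intro sum_mono norm_expsum_interval_le) auto
  also have "\<dots> \<le> p * (1 + ln p) - sqrt p"
    using sum_inverse_sin_le[OF assms(2) \<open>p \<ge> 3\<close>] .
  finally show ?thesis .
qed

section \<open>Exponential sums over multiplicative subgroups\<close>

lemma card_inter_eq_sum_expsum:
  assumes "n > 0" "X \<subseteq> {..<n}" "H \<subseteq> {..<n}"
  shows "of_nat n * of_nat (card (X \<inter> H)) = (\<Sum>a<n. cnj (expsum n X a) * expsum n H a)"
proof -
  have finite: "finite X" "finite H" using assms finite_subset by auto
  have orth: "(\<Sum>a<n. addchar n (int a * (int h - int x))) = (if x = h then of_nat n else 0)"
    if "x \<in> X" "h \<in> H" for x h
  proof -
    have "x < n" "h < n" using that assms by auto
    hence "int n dvd int h - int x \<longleftrightarrow> x = h"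
      by (auto simp: cong_iff_dvd_diff[symmetric] cong_int_iff dest: cong_less_modulus_unique_nat)
    thus ?thesis using sum_addchar_multiples[OF assms(1)] by simp
  qed
  have "(\<Sum>a<n. cnj (expsum n X a) * expsum n H a)
      = (\<Sum>a<n. \<Sum>h\<in>H. \<Sum>x\<in>X. addchar n (int a * (int h - int x)))"
    by (simp add: expsum_def cnj_sum sum_product cnj_addchar algebra_simps flip: addchar_add)
  also have "\<dots> = (\<Sum>h\<in>H. \<Sum>x\<in>X. \<Sum>a<n. addchar n (int a * (int h - int x)))"
    by (subst sum.swap) (rule sum.cong[OF refl sum.swap])
  also have "\<dots> = (\<Sum>h\<in>H. \<Sum>x\<in>X. if x = h then of_nat n else 0)"
    by (intro sum.cong refl orth)
  also have "\<dots> = of_nat n * of_nat (card (X \<inter> H))"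
    using finite by (simp add: sum.delta' sum.If_cases Int_commute)
  finally show ?thesis ..
qed

lemma sum_norm_expsum_square:
  assumes "n > 0" "H \<subseteq> {..<n}"
  shows "(\<Sum>a<n. (norm (expsum n H a))\<^sup>2) = n * card H"
proof -
  have "complex_of_real (\<Sum>a<n. (norm (expsum n H a))\<^sup>2) = (\<Sum>a<n. cnj (expsum n H a) * expsum n H a)"
    by (simp only: of_real_sum complex_norm_square mult.commute)
  also have "\<dots> = of_real (n * card H)"
    using card_inter_eq_sum_expsum[OF assms(1,2,2)] by simp
  finally show ?thesis by (simp only: of_real_eq_iff)
qed

lemma card_inter_minus_main_term:
  assumes "n > 0" "X \<subseteq> {..<n}" "H \<subseteq> {..<n}"
  shows "of_nat n * of_nat (card (X \<inter> H)) - of_nat (card X) * of_nat (card H)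
       = (\<Sum>a\<in>{1..<n}. cnj (expsum n X a) * expsum n H a)"
proof -
  have "{..<n} = insert 0 {1..<n}" using assms(1) by auto
  moreover have "expsum n A 0 = of_nat (card A)" for A by (simp add: expsum_def)
  ultimately show ?thesis by (simp add: card_inter_eq_sum_expsum[OF assms])
qed

definition mult_subgroup :: "nat \<Rightarrow> nat set \<Rightarrow> bool" where
  "mult_subgroup p H \<longleftrightarrow> H \<subseteq> {1..<p} \<and> 1 \<in> H \<and> (\<forall>x\<in>H. \<forall>y\<in>H. (x * y) mod p \<in> H)"

lemma expsum_mult_subgroup_invariant:
  assumes "prime p" "mult_subgroup p H" "k \<in> H"
  shows "expsum p H (a * k) = expsum p H a"
proof -
  have H: "H \<subseteq> {1..<p}" "\<And>x. x \<in> H \<Longrightarrow> (k * x) mod p \<in> H"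
    using assms(2,3) by (auto simp: mult_subgroup_def)
  have "0 < k" "k < p" using H(1) assms(3) by auto
  hence "\<not> p dvd k" by (auto dest: dvd_imp_le)
  hence inj: "inj_on (\<lambda>h. (k * h) mod p) H"
    using bij_betw_mult_mod_prime[OF assms(1)] H(1) by (auto dest: bij_betw_imp_inj_on inj_on_subset)
  hence perm: "(\<lambda>h. (k * h) mod p) ` H = H"
    using H H(1) finite_subset by (intro endo_inj_surj) auto
  have "expsum p H (a * k) = (\<Sum>h\<in>H. addchar p (int a * int ((k * h) mod p)))"
    unfolding expsum_def using prime_gt_0_nat[OF assms(1)]
    by (intro sum.cong refl addchar_cong)
       (simp_all add: cong_def zmod_int mod_mult_right_eq mult.assoc flip: of_nat_mult)
  also have "\<dots> = expsum p H a"
    unfolding expsum_def by (subst (2) perm[symmetric]) (simp add: sum.reindex[OF inj])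
  finally show ?thesis .
qed

(* The sum is constant on the coset a H, so Parseval bounds card H times its square by p card H. *)
lemma norm_expsum_mult_subgroup_le:
  assumes "prime p" "mult_subgroup p H" "\<not> p dvd a"
  shows "norm (expsum p H a) \<le> sqrt p"
proof -
  have H: "H \<subseteq> {1..<p}" "1 \<in> H" using assms(2) by (auto simp: mult_subgroup_def)
  have p: "p > 0" using assms(1) prime_gt_0_nat by blast
  have "card H > 0" using H finite_subset card_gt_0_iff by blast
  have inj: "inj_on (\<lambda>k. (a * k) mod p) H"
    using bij_betw_mult_mod_prime[OF assms(1,3)] H(1) by (auto dest: bij_betw_imp_inj_on inj_on_subset)
  have "card H * (norm (expsum p H a))\<^sup>2 = (\<Sum>k\<in>H. (norm (expsum p H ((a * k) mod p)))\<^sup>2)"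
    using expsum_mult_subgroup_invariant[OF assms(1,2)] by (simp add: expsum_mod[OF p])
  also have "\<dots> = (\<Sum>b\<in>(\<lambda>k. (a * k) mod p) ` H. (norm (expsum p H b))\<^sup>2)"
    by (simp add: sum.reindex[OF inj])
  also have "\<dots> \<le> (\<Sum>b<p. (norm (expsum p H b))\<^sup>2)"
    using p by (intro sum_mono2) auto
  also have "\<dots> = card H * p"
    using H(1) by (subst sum_norm_expsum_square[OF p]) auto
  finally have "(norm (expsum p H a))\<^sup>2 \<le> p" using \<open>card H > 0\<close> by simp
  thus ?thesis by (simp add: real_le_rsqrt)
qed

lemma expsum_progression:
  assumes "D > 0"
  shows "expsum n ((\<lambda>y. D * y) ` {1..N}) a = expsum n {1..N} (a * D)"
proof -
  have "inj_on (\<lambda>y. D * y) {1..N}" using assms by (auto simp: inj_on_def)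
  thus ?thesis by (simp add: expsum_def sum.reindex mult.assoc)
qed

lemma card_progression_inter_mult_subgroup:
  fixes p D N :: nat
  assumes "prime p" "odd p" "mult_subgroup p H" "0 < D" "D < p" "D * N < p"
  shows "\<bar>card ((\<lambda>y. D * y) ` {1..N} \<inter> H) - real N * card H / p\<bar> \<le> sqrt p * (1 + ln p) - 1"
proof -
  define X where "X = (\<lambda>y. D * y) ` {1..N}"
  define err where "err = real p * card (X \<inter> H) - real N * card H"
  have p: "p > 0" using assms(1) prime_gt_0_nat by blast
  have H: "H \<subseteq> {..<p}" using assms(3) by (auto simp: mult_subgroup_def)
  have X: "X \<subseteq> {..<p}"
    using assms(6) by (auto simp: X_def intro: le_less_trans[of _ "D * N"])
  have "card X = N" unfolding X_def using assms(4) by (subst card_image) (auto simp: inj_on_def)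
  hence "complex_of_real err = (\<Sum>a\<in>{1..<p}. cnj (expsum p X a) * expsum p H a)"
    using card_inter_minus_main_term[OF p X H] by (simp add: err_def)
  hence "\<bar>err\<bar> = norm (\<Sum>a\<in>{1..<p}. cnj (expsum p X a) * expsum p H a)"
    by (metis norm_of_real)
  also have "\<dots> \<le> (\<Sum>a\<in>{1..<p}. norm (expsum p X a) * norm (expsum p H a))"
    by (rule order_trans[OF norm_sum]) (simp add: norm_mult)
  also have "\<dots> \<le> (\<Sum>a\<in>{1..<p}. norm (expsum p X a) * sqrt p)"
    by (intro sum_mono mult_left_mono norm_expsum_mult_subgroup_le[OF assms(1,3)] nat_dvd_not_less)
       simp_all
  also have "\<dots> = sqrt p * (\<Sum>a\<in>{1..<p}. norm (expsum p {1..N} (a * D)))"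
    unfolding X_def expsum_progression[OF assms(4)] by (simp add: sum_distrib_left mult.commute)
  also have "\<dots> \<le> sqrt p * (p * (1 + ln p) - sqrt p)"
    using assms(4,5) by (intro mult_left_mono sum_norm_expsum_interval_le[OF assms(1,2)] nat_dvd_not_less)
       simp_all
  also have "\<dots> = p * (sqrt p * (1 + ln p) - 1)"
    by (simp add: algebra_simps)
  finally have "\<bar>err\<bar> / p \<le> sqrt p * (1 + ln p) - 1"
    using p by (simp add: divide_le_eq mult.commute)
  moreover have "card (X \<inter> H) - real N * card H / p = err / p"
    using p by (simp add: err_def field_simps)
  ultimately show ?thesis by (simp add: X_def abs_divide)
qed

section \<open>Roots of unity modulo a prime\<close>

lemma prime_primitive_root_obtain:
  fixes p :: nat
  assumes "prime p"
  obtains r where "bij_betw (\<lambda>i. r ^ i mod p) {..<p - 1} {1..<p}"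
    "\<And>i. [r ^ i = 1] (mod p) \<longleftrightarrow> p - 1 dvd i" "\<not> p dvd r"
proof -
  have p: "p > 1" using assms prime_gt_1_nat by blast
  obtain r where r: "residue_primroot p r"
    using prime_primitive_root_exists[OF p assms] by blast
  have "bij_betw (\<lambda>i. r ^ i mod p) {..<totient p} (totatives p)"
    by (rule residue_primroot_is_generator[OF p r])
  moreover have "totatives p = {1..<p}"
    using totatives_prime[OF assms]
    by (simp add: greaterThanLessThan_eq atLeastLessThan_def atLeast_def greaterThan_def Suc_le_eq)
  ultimately have bij: "bij_betw (\<lambda>i. r ^ i mod p) {..<p - 1} {1..<p}"
    by (simp add: totient_prime[OF assms])
  have "ord p r = p - 1" using r assms by (simp add: residue_primroot_def totient_prime)
  hence ord: "[r ^ i = 1] (mod p) \<longleftrightarrow> p - 1 dvd i" for i using ord_divides'[of r i p] by simp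
  have "coprime p r" using r by (simp add: residue_primroot_def)
  hence "\<not> p dvd r" using assms coprime_absorb_left not_prime_unit by blast
  with bij ord show ?thesis by (rule that)
qed

definition unit_roots :: "nat \<Rightarrow> nat \<Rightarrow> nat set" where
  "unit_roots p k = {x \<in> {1..<p}. [x ^ k = 1] (mod p)}"

lemma mult_subgroup_unit_roots:
  assumes "prime p"
  shows "mult_subgroup p (unit_roots p k)"
  unfolding mult_subgroup_def
proof (intro conjI ballI)
  show "unit_roots p k \<subseteq> {1..<p}" by (auto simp: unit_roots_def)
  show "1 \<in> unit_roots p k" using prime_gt_1_nat[OF assms] by (simp add: unit_roots_def)
  fix x y assume "x \<in> unit_roots p k" "y \<in> unit_roots p k"
  hence x: "0 < x" "x < p" "[x ^ k = 1] (mod p)" and y: "0 < y" "y < p" "[y ^ k = 1] (mod p)"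
    by (auto simp: unit_roots_def)
  have "\<not> p dvd x * y"
    using x y nat_dvd_not_less prime_dvd_mult_iff[OF assms] by blast
  hence "(x * y) mod p \<in> {1..<p}" using prime_gt_0_nat[OF assms] by (auto simp: dvd_eq_mod_eq_0)
  moreover have "[((x * y) mod p) ^ k = x ^ k * y ^ k] (mod p)"
    by (simp add: cong_def power_mod power_mult_distrib)
  hence "[((x * y) mod p) ^ k = 1] (mod p)"
    using cong_mult[OF x(3) y(3)] cong_trans by fastforce
  ultimately show "(x * y) mod p \<in> unit_roots p k" by (simp add: unit_roots_def)
qed

lemma card_unit_roots:
  assumes "prime p" "k dvd p - 1"
  shows "card (unit_roots p k) = k"
proof -
  obtain r where bij: "bij_betw (\<lambda>i. r ^ i mod p) {..<p - 1} {1..<p}"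
    and ord: "\<And>i. [r ^ i = 1] (mod p) \<longleftrightarrow> p - 1 dvd i"
    using prime_primitive_root_obtain[OF assms(1)] by blast
  define f where "f i = r ^ i mod p" for i
  obtain m where m: "p - 1 = k * m" using assms(2) by blast
  have "k > 0" "m > 0" using m prime_gt_1_nat[OF assms(1)] by (auto intro!: gr0I)
  have root_iff: "[f i ^ k = 1] (mod p) \<longleftrightarrow> m dvd i" for i
  proof -
    have "[f i ^ k = r ^ (i * k)] (mod p)" by (simp add: f_def cong_def power_mod power_mult)
    hence "[f i ^ k = 1] (mod p) \<longleftrightarrow> [r ^ (i * k) = 1] (mod p)"
      using cong_trans cong_sym by blast
    also have "\<dots> \<longleftrightarrow> m dvd i" using ord m \<open>k > 0\<close> by (simp add: mult.commute)
    finally show ?thesis .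
  qed
  have "unit_roots p k = {x \<in> f ` {..<p - 1}. [x ^ k = 1] (mod p)}"
    using bij by (simp add: unit_roots_def bij_betw_def f_def)
  also have "\<dots> = f ` {i \<in> {..<p - 1}. [f i ^ k = 1] (mod p)}" by blast
  also have "\<dots> = f ` {i \<in> {..<p - 1}. m dvd i}" using root_iff by auto
  also have "{i \<in> {..<p - 1}. m dvd i} = (\<lambda>j. m * j) ` {..<k}"
    using m \<open>m > 0\<close> by (auto simp: mult.commute)
  finally have roots: "unit_roots p k = f ` (\<lambda>j. m * j) ` {..<k}" .
  have "(\<lambda>j. m * j) ` {..<k} \<subseteq> {..<p - 1}" using m \<open>m > 0\<close> by auto
  moreover have "inj_on f {..<p - 1}" using bij by (simp add: bij_betw_def f_def[abs_def])
  ultimately have "inj_on f ((\<lambda>j. m * j) ` {..<k})" by (rule inj_on_subset[rotated])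
  moreover have "inj_on (\<lambda>j. m * j) {..<k}" using \<open>m > 0\<close> by (auto simp: inj_on_def)
  ultimately show ?thesis by (simp add: roots card_image)
qed

lemma power_cong_solvable:
  fixes p r h b :: nat
  assumes "prime p" "\<not> p dvd r" "0 < h" "gcd h (p - 1) dvd b"
  shows "\<exists>g\<in>{1..<p}. [g ^ h = r ^ b] (mod p)"
proof -
  define n where "n = p - 1"
  obtain x y where xy: "h * x = n * y + gcd h n" using bezout_nat[of h n] assms(3) by auto
  obtain t where t: "b = gcd h n * t" using assms(4) by (auto simp: n_def)
  define g where "g = r ^ (x * t) mod p"
  have "\<not> p dvd r ^ (x * t)" using assms(1,2) prime_dvd_power by blast
  hence "g \<in> {1..<p}" using prime_gt_0_nat[OF assms(1)] by (auto simp: g_def dvd_eq_mod_eq_0)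
  moreover have "[g ^ h = r ^ b] (mod p)"
  proof -
    have exponent: "h * x * t = n * (y * t) + b"
    proof -
      have "h * x * t = (n * y + gcd h n) * t" using xy by simp
      thus ?thesis using t by (simp add: algebra_simps)
    qed
    have "[g ^ h = r ^ (h * x * t)] (mod p)"
      by (simp add: g_def cong_def power_mod ac_simps flip: power_mult)
    also have "r ^ (h * x * t) = (r ^ n) ^ (y * t) * r ^ b"
      by (simp add: exponent power_add power_mult)
    also have "[(r ^ n) ^ (y * t) * r ^ b = 1 ^ (y * t) * r ^ b] (mod p)"
      using fermat_theorem[OF assms(1,2)] by (intro cong_mult cong_pow) (simp_all add: n_def)
    finally show ?thesis by simp
  qed
  ultimately show ?thesis by blast
qed

(* With d = gcd h (p - 1), the h-th powers are the d-th powers, that is, the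
   ((p - 1) div d)-th roots of unity. *)
lemma ex_power_cong_self_iff:
  fixes p h :: nat
  assumes p: "prime p" and h: "h \<in> {1..<p}"
  shows "(\<exists>g\<in>{1..<p}. [g ^ h = h] (mod p)) \<longleftrightarrow> h \<in> unit_roots p ((p - 1) div gcd h (p - 1))"
proof -
  define d where "d = gcd h (p - 1)"
  define k where "k = (p - 1) div d"
  have n: "p - 1 = d * k" by (simp add: d_def k_def)
  have "k > 0" using p h prime_gt_1_nat by (auto simp: k_def d_def div_greater_zero_iff gcd_le2_nat)
  show ?thesis unfolding d_def[symmetric] k_def[symmetric]
  proof
    assume "\<exists>g\<in>{1..<p}. [g ^ h = h] (mod p)"
    then obtain g where g: "g \<in> {1..<p}" "[g ^ h = h] (mod p)" by blast
    have "\<not> p dvd g" using g(1) by (auto dest: dvd_imp_le)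
    have "d dvd h" by (simp add: d_def)
    then obtain h' where "h = d * h'" ..
    have "[h ^ k = (g ^ h) ^ k] (mod p)" by (rule cong_pow[OF cong_sym[OF g(2)]])
    also have "(g ^ h) ^ k = (g ^ (p - 1)) ^ h'"
      unfolding n \<open>h = d * h'\<close> by (simp add: ac_simps flip: power_mult)
    also have "[(g ^ (p - 1)) ^ h' = 1] (mod p)"
      using cong_pow[OF fermat_theorem[OF p \<open>\<not> p dvd g\<close>]] by simp
    finally show "h \<in> unit_roots p k" using h by (simp add: unit_roots_def)
  next
    assume "h \<in> unit_roots p k"
    hence root: "[h ^ k = 1] (mod p)" by (simp add: unit_roots_def)
    obtain r where bij: "bij_betw (\<lambda>i. r ^ i mod p) {..<p - 1} {1..<p}"
      and ord: "\<And>i. [r ^ i = 1] (mod p) \<longleftrightarrow> p - 1 dvd i" and "\<not> p dvd r"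
      using prime_primitive_root_obtain[OF p] by blast
    have "h \<in> (\<lambda>i. r ^ i mod p) ` {..<p - 1}" using bij h by (simp add: bij_betw_def)
    then obtain b where "h = r ^ b mod p" by blast
    hence hb: "[r ^ b = h] (mod p)" by (simp add: cong_def)
    have "[r ^ (b * k) = 1] (mod p)"
      using cong_trans[OF cong_pow[OF hb] root] by (simp add: power_mult)
    hence "d * k dvd b * k" using ord n by metis
    hence "d dvd b" using \<open>k > 0\<close> by simp
    moreover have "0 < h" using h by simp
    ultimately obtain g where "g \<in> {1..<p}" "[g ^ h = r ^ b] (mod p)"
      using power_cong_solvable[OF p \<open>\<not> p dvd r\<close>] unfolding d_def by blast
    thus "\<exists>g\<in>{1..<p}. [g ^ h = h] (mod p)" using hb cong_trans by blast
  qed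
qed

section \<open>Inclusion-exclusion over prime factors\<close>

lemma prod_of_bool_eq:
  assumes "finite A"
  shows "(\<Prod>x\<in>A. of_bool (P x)) = (of_bool (\<forall>x\<in>A. P x) :: 'a :: comm_semiring_1)"
  using assms by (induction A rule: finite_induct) auto

lemma prod_primes_dvd_iff:
  fixes S :: "nat set"
  assumes "finite S" "\<forall>q\<in>S. prime q"
  shows "\<Prod>S dvd y \<longleftrightarrow> (\<forall>q\<in>S. q dvd y)"
proof
  assume "\<Prod>S dvd y"
  thus "\<forall>q\<in>S. q dvd y" using assms(1) dvd_prodI[of S _ "\<lambda>x. x"] dvd_trans by blast
next
  assume "\<forall>q\<in>S. q dvd y"
  hence "[y = 0] (mod (\<Prod>q\<in>S. q))"
    using assms(2) by (intro coprime_cong_prod_nat) (auto simp: cong_0_iff primes_coprime)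
  thus "\<Prod>S dvd y" by (simp add: cong_0_iff)
qed

lemma prod_subset_prime_factors:
  fixes N :: nat
  assumes "N > 0" "S \<subseteq> prime_factors N"
  shows "\<Prod>S dvd N" "\<Prod>S > 0"
proof -
  have S: "finite S" "\<forall>q\<in>S. prime q" using assms(2) finite_subset by auto
  thus "\<Prod>S dvd N" using assms by (auto simp: prod_primes_dvd_iff prime_factors_dvd)
  show "\<Prod>S > 0" using S by (simp add: prime_gt_0_nat prod_pos)
qed

lemma coprime_iff_prime_factors:
  fixes y N :: nat
  assumes "N > 0"
  shows "coprime y N \<longleftrightarrow> (\<forall>q\<in>prime_factors N. \<not> q dvd y)"
proof
  assume "coprime y N"
  show "\<forall>q\<in>prime_factors N. \<not> q dvd y"
  proof (intro ballI notI)
    fix q assume "q \<in> prime_factors N" "q dvd y"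
    hence "prime q" "q dvd N" by (auto simp: in_prime_factors_iff)
    hence "is_unit q" using coprime_common_divisor[OF \<open>coprime y N\<close> \<open>q dvd y\<close>] by simp
    thus False using \<open>prime q\<close> by (metis not_prime_unit)
  qed
next
  assume no_common: "\<forall>q\<in>prime_factors N. \<not> q dvd y"
  show "coprime y N"
  proof (rule ccontr)
    assume "\<not> coprime y N"
    hence "gcd y N \<noteq> 1" by (simp only: coprime_iff_gcd_eq_1 not_False_eq_True)
    then obtain q where "prime q" "q dvd gcd y N" using prime_factor_nat[of "gcd y N"] by auto
    hence "q dvd y" "q \<in> prime_factors N" using assms by (simp_all add: in_prime_factors_iff)
    thus False using no_common by blast
  qed
qed

lemma of_bool_coprime_eq_sum:
  fixes y N :: nat
  assumes "N > 0"
  shows "of_bool (coprime y N)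
       = (\<Sum>S\<in>Pow (prime_factors N). (-1) ^ card S * of_bool (\<Prod>S dvd y) :: 'a :: comm_ring_1)"
proof -
  have "of_bool (coprime y N) = (\<Prod>q\<in>prime_factors N. 1 - of_bool (q dvd y) :: 'a)"
    using assms by (simp add: coprime_iff_prime_factors prod_of_bool_eq flip: of_bool_not_iff)
  also have "\<dots> = (\<Sum>S\<in>Pow (prime_factors N). (-1) ^ card S * (\<Prod>q\<in>S. of_bool (q dvd y)))"
    by (simp add: prod_diff_conv_sum)
  also have "\<dots> = (\<Sum>S\<in>Pow (prime_factors N). (-1) ^ card S * of_bool (\<Prod>S dvd y))"
  proof (intro sum.cong refl)
    fix S assume "S \<in> Pow (prime_factors N)"
    hence "finite S" "\<forall>q\<in>S. prime q" by (auto intro: finite_subset)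
    thus "(-1) ^ card S * (\<Prod>q\<in>S. of_bool (q dvd y)) = (-1) ^ card S * (of_bool (\<Prod>S dvd y) :: 'a)"
      by (simp add: prod_of_bool_eq prod_primes_dvd_iff)
  qed
  finally show ?thesis .
qed

lemma of_bool_gcd_eq_sum:
  fixes n d h :: nat
  assumes "n > 0" "d dvd n"
  shows "of_bool (gcd h n = d)
       = (\<Sum>S\<in>Pow (prime_factors (n div d)). (-1) ^ card S * of_bool (d * \<Prod>S dvd h) :: 'a :: comm_ring_1)"
proof (cases "d dvd h")
  case False
  hence "\<not> d * \<Prod>S dvd h" for S using dvd_mult_left by blast
  thus ?thesis using False by auto
next
  case True
  then obtain y where y: "h = d * y" ..
  obtain N where N: "n = d * N" using assms(2) ..
  have "d > 0" "N > 0" using assms N by auto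
  have "gcd h n = d * gcd y N" by (simp add: y N gcd_mult_distrib_nat)
  hence "gcd h n = d \<longleftrightarrow> gcd y N = 1" using \<open>d > 0\<close> by simp
  hence "gcd h n = d \<longleftrightarrow> coprime y N" by (simp only: coprime_iff_gcd_eq_1)
  moreover have "d * \<Prod>S dvd h \<longleftrightarrow> \<Prod>S dvd y" for S using y \<open>d > 0\<close> by simp
  ultimately show ?thesis
    using of_bool_coprime_eq_sum[OF \<open>N > 0\<close>, of y] \<open>d > 0\<close> by (simp add: N)
qed

lemma multiples_inter_eq_image:
  fixes D n :: nat
  assumes "D > 0"
  shows "{h \<in> {1..n}. D dvd h \<and> h \<in> H} = (\<lambda>y. D * y) ` {1..n div D} \<inter> H"
proof -
  have key: "D * y \<in> {1..n} \<longleftrightarrow> y \<in> {1..n div D}" for y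
  proof -
    have "1 \<le> D * y \<longleftrightarrow> 1 \<le> y" using assms by (simp add: Suc_le_eq)
    moreover have "D * y \<le> n \<longleftrightarrow> y \<le> n div D"
      using assms by (simp add: less_eq_div_iff_mult_less_eq mult.commute)
    ultimately show ?thesis by simp
  qed
  show ?thesis
  proof (intro equalityI subsetI)
    fix h assume "h \<in> {h \<in> {1..n}. D dvd h \<and> h \<in> H}"
    hence h: "h \<in> {1..n}" "D dvd h" "h \<in> H" by simp_all
    then obtain y where "h = D * y" by (elim dvdE)
    thus "h \<in> (\<lambda>y. D * y) ` {1..n div D} \<inter> H" using h(1,3) key by blast
  next
    fix h assume "h \<in> (\<lambda>y. D * y) ` {1..n div D} \<inter> H"
    then obtain y where "y \<in> {1..n div D}" "h = D * y" "h \<in> H" by blast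
    thus "h \<in> {h \<in> {1..n}. D dvd h \<and> h \<in> H}" using key by auto
  qed
qed
lemma card_filter_eq_sum_of_bool:
  assumes "finite A"
  shows "of_nat (card {x \<in> A. P x}) = (\<Sum>x\<in>A. of_bool (P x) :: 'a :: semiring_1)"
proof -
  have "{x \<in> A. P x} = A \<inter> {x. P x}" by blast
  thus ?thesis using assms by simp
qed

lemma card_gcd_eq_inter_eq_sum:
  fixes n d :: nat and H :: "nat set"
  assumes "n > 0" "d dvd n"
  shows "real (card {h \<in> {1..n}. gcd h n = d \<and> h \<in> H})
       = (\<Sum>S\<in>Pow (prime_factors (n div d)).
            (-1) ^ card S * real (card ((\<lambda>y. d * \<Prod>S * y) ` {1..n div (d * \<Prod>S)} \<inter> H)))"
proof -
  let ?P = "Pow (prime_factors (n div d))"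
  have "n div d > 0" using assms by (metis dvd_div_eq_0_iff gr0I not_gr0)
  have "real (card {h \<in> {1..n}. gcd h n = d \<and> h \<in> H})
      = (\<Sum>h\<in>{1..n}. of_bool (h \<in> H) * of_bool (gcd h n = d))"
    unfolding card_filter_eq_sum_of_bool[OF finite_atLeastAtMost]
    by (intro sum.cong refl) (simp add: of_bool_def)
  also have "\<dots> = (\<Sum>h\<in>{1..n}. \<Sum>S\<in>?P. (-1) ^ card S * of_bool (d * \<Prod>S dvd h \<and> h \<in> H))"
  proof (rule sum.cong[OF refl])
    fix h
    have "of_bool (h \<in> H) * of_bool (gcd h n = d)
        = (\<Sum>S\<in>?P. of_bool (h \<in> H) * ((-1) ^ card S * of_bool (d * \<Prod>S dvd h)) :: real)"
      by (simp only: of_bool_gcd_eq_sum[OF assms] sum_distrib_left)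
    also have "\<dots> = (\<Sum>S\<in>?P. (-1) ^ card S * of_bool (d * \<Prod>S dvd h \<and> h \<in> H))"
      by (intro sum.cong refl) (simp add: of_bool_def)
    finally show "of_bool (h \<in> H) * of_bool (gcd h n = d)
        = (\<Sum>S\<in>?P. (-1) ^ card S * of_bool (d * \<Prod>S dvd h \<and> h \<in> H) :: real)" .
  qed
  also have "\<dots> = (\<Sum>S\<in>?P. (-1) ^ card S * (\<Sum>h\<in>{1..n}. of_bool (d * \<Prod>S dvd h \<and> h \<in> H)))"
    by (subst sum.swap) (simp only: sum_distrib_left)
  also have "\<dots> = (\<Sum>S\<in>?P. (-1) ^ card S * real (card {h \<in> {1..n}. d * \<Prod>S dvd h \<and> h \<in> H}))"
    by (simp only: card_filter_eq_sum_of_bool[OF finite_atLeastAtMost])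
  also have "\<dots> = (\<Sum>S\<in>?P. (-1) ^ card S * real (card ((\<lambda>y. d * \<Prod>S * y) ` {1..n div (d * \<Prod>S)} \<inter> H)))"
  proof (intro sum.cong refl)
    fix S assume "S \<in> ?P"
    hence "\<Prod>S dvd n div d" "\<Prod>S > 0"
      using prod_subset_prime_factors[OF \<open>n div d > 0\<close>, of S] by auto
    hence "d * \<Prod>S > 0" "d * \<Prod>S dvd n"
      using assms by (auto simp: dvd_div_iff_mult mult.commute)
    thus "(-1) ^ card S * real (card {h \<in> {1..n}. d * \<Prod>S dvd h \<and> h \<in> H})
        = (-1) ^ card S * real (card ((\<lambda>y. d * \<Prod>S * y) ` {1..n div (d * \<Prod>S)} \<inter> H))"
      by (simp only: multiples_inter_eq_image)
  qed
  finally show ?thesis .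
qed

lemma totient_eq_sum:
  fixes N :: nat
  assumes "N > 0"
  shows "real (totient N) = (\<Sum>S\<in>Pow (prime_factors N). (-1) ^ card S * real (N div \<Prod>S))"
proof -
  have "totatives N = {h \<in> {1..N}. gcd h N = 1 \<and> h \<in> UNIV}"
    unfolding totatives_def coprime_iff_gcd_eq_1 by auto
  hence "real (totient N)
      = (\<Sum>S\<in>Pow (prime_factors N). (-1) ^ card S * real (card ((\<lambda>y. \<Prod>S * y) ` {1..N div \<Prod>S})))"
    using card_gcd_eq_inter_eq_sum[OF assms, of 1 UNIV] by (simp add: totient_def)
  also have "\<dots> = (\<Sum>S\<in>Pow (prime_factors N). (-1) ^ card S * real (N div \<Prod>S))"
  proof (intro sum.cong refl)
    fix S assume "S \<in> Pow (prime_factors N)"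
    hence "\<Prod>S > 0" using prod_subset_prime_factors[OF assms] by blast
    hence "inj_on (\<lambda>y. \<Prod>S * y) {1..N div \<Prod>S}" by (auto simp: inj_on_def)
    thus "(-1) ^ card S * real (card ((\<lambda>y. \<Prod>S * y) ` {1..N div \<Prod>S}))
        = (-1) ^ card S * real (N div \<Prod>S)" by (simp add: card_image)
  qed
  finally show ?thesis .
qed

lemma prod_primes_dvd_imp_subset:
  fixes A B :: "nat set"
  assumes "finite A" "finite B" "\<forall>q\<in>A. prime q" "\<forall>q\<in>B. prime q" "\<Prod>A dvd \<Prod>B"
  shows "A \<subseteq> B"
proof
  fix q assume "q \<in> A"
  hence "q dvd \<Prod>B" using assms(1,5) dvd_prodI[of A q "\<lambda>x. x"] dvd_trans by blast
  moreover have "prime q" using assms(3) \<open>q \<in> A\<close> by blast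
  ultimately obtain x where "x \<in> B" "q dvd x"
    using prime_dvd_prod_iff[OF assms(2), of q "\<lambda>x. x"] by auto
  moreover have "prime x" using assms(4) \<open>x \<in> B\<close> by blast
  ultimately show "q \<in> B" using \<open>prime q\<close> primes_dvd_imp_eq by blast
qed

lemma card_Pow_prime_factors_le:
  fixes N n :: nat
  assumes "N dvd n" "n > 0"
  shows "card (Pow (prime_factors N)) \<le> num_divisors n"
proof -
  have "N > 0" using assms by (auto intro!: gr0I)
  have primes: "finite S" "\<forall>q\<in>S. prime q" if "S \<in> Pow (prime_factors N)" for S
    using that finite_subset by auto
  have "inj_on Prod (Pow (prime_factors N))"
    by (intro inj_onI equalityI prod_primes_dvd_imp_subset) (simp_all add: primes)
  moreover have "Prod ` Pow (prime_factors N) \<subseteq> {d. d dvd n}"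
    using prod_subset_prime_factors(1)[OF \<open>N > 0\<close>] assms(1) dvd_trans by blast
  moreover have "finite {d. d dvd n}" using assms(2) by simp
  ultimately show ?thesis
    unfolding num_divisors_def by (metis card_image card_mono)
qed

section \<open>Counting the exponents\<close>

lemma card_progression_inter_unit_roots:
  fixes p d D :: nat
  assumes "prime p" "odd p" "d dvd p - 1" "D dvd p - 1"
  shows "\<bar>card ((\<lambda>y. D * y) ` {1..(p - 1) div D} \<inter> unit_roots p ((p - 1) div d))
          - real ((p - 1) div D) / d\<bar> \<le> sqrt p * (1 + ln p)"
proof -
  define M where "M = (p - 1) div D"
  have "p > 1" using prime_gt_1_nat[OF assms(1)] .
  have "d > 0" "D > 0" using assms(3,4) \<open>p > 1\<close> by (auto intro!: gr0I)
  have "D * M = p - 1" using assms(4) by (simp add: M_def)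
  moreover have "M > 0" using \<open>D * M = p - 1\<close> \<open>p > 1\<close> by (auto intro!: gr0I)
  hence "D \<le> D * M" by simp
  ultimately have "D * M < p" "D < p" using \<open>p > 1\<close> by linarith+
  have "(p - 1) div d dvd p - 1" using assms(3) by (metis dvd_div_mult_self dvd_triv_left)
  hence card: "card (unit_roots p ((p - 1) div d)) = (p - 1) div d"
    by (rule card_unit_roots[OF assms(1)])
  have "\<bar>card ((\<lambda>y. D * y) ` {1..M} \<inter> unit_roots p ((p - 1) div d))
      - M * real ((p - 1) div d) / p\<bar> \<le> sqrt p * (1 + ln p) - 1"
    using card_progression_inter_mult_subgroup[OF assms(1,2)
          mult_subgroup_unit_roots[OF assms(1), of "(p - 1) div d"] \<open>D > 0\<close> \<open>D < p\<close> \<open>D * M < p\<close>]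
    unfolding card by simp
  moreover have "\<bar>M * real ((p - 1) div d) / p - M / d\<bar> \<le> 1"
  proof -
    have quotient: "real ((p - 1) div d) = (real p - 1) / d"
      using assms(3) \<open>p > 1\<close> by (simp add: real_of_nat_div of_nat_diff)
    have eq: "M * real ((p - 1) div d) / p - M / d = - (M / (d * p))"
      unfolding quotient using \<open>d > 0\<close> \<open>p > 1\<close> by (simp add: field_simps)
    have "M \<le> D * M" "p \<le> d * p" using \<open>D > 0\<close> \<open>d > 0\<close> by simp_all
    hence "M \<le> d * p" using \<open>D * M = p - 1\<close> by linarith
    hence "real M \<le> real d * real p" by (simp only: of_nat_mult[symmetric] of_nat_le_iff)
    hence "M / (d * p) \<le> 1" using \<open>d > 0\<close> \<open>p > 1\<close> by (simp add: divide_le_eq_1)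
    thus ?thesis unfolding eq by simp
  qed
  ultimately show ?thesis unfolding M_def by linarith
qed

(* By ex_power_cong_self_iff, the exponents h counted by G_any_any p with gcd h (p - 1) = d. *)
definition G_gcd_class :: "nat \<Rightarrow> nat \<Rightarrow> nat set" where
  "G_gcd_class p d = {h \<in> {1..p - 1}. gcd h (p - 1) = d \<and> h \<in> unit_roots p ((p - 1) div d)}"

lemma card_G_gcd_class_approx:
  fixes p d :: nat
  assumes "prime p" "odd p" "d dvd p - 1"
  shows "\<bar>card (G_gcd_class p d) - 1 / d * totient ((p - 1) div d)\<bar>
           \<le> num_divisors (p - 1) * (sqrt p * (1 + ln p))"
proof -
  define n where "n = p - 1"
  define E where "E = sqrt p * (1 + ln p)"
  define C where
    "C S = real (card ((\<lambda>y. d * \<Prod>S * y) ` {1..n div (d * \<Prod>S)} \<inter> unit_roots p (n div d)))"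
    for S
  let ?P = "Pow (prime_factors (n div d))"
  have "n > 0" using prime_gt_1_nat[OF assms(1)] by (simp add: n_def)
  have "n div d > 0" using assms(3) \<open>n > 0\<close> by (metis n_def dvd_div_eq_0_iff gr0I not_gr0)
  have "card (G_gcd_class p d) - 1 / d * totient (n div d)
      = (\<Sum>S\<in>?P. (-1) ^ card S * C S) - (\<Sum>S\<in>?P. (-1) ^ card S * (real (n div d div \<Prod>S) / d))"
    using card_gcd_eq_inter_eq_sum[OF \<open>n > 0\<close> assms(3)[folded n_def]] totient_eq_sum[OF \<open>n div d > 0\<close>]
    by (simp add: G_gcd_class_def C_def n_def sum_distrib_left sum_divide_distrib mult_ac)
  also have "\<dots> = (\<Sum>S\<in>?P. (-1) ^ card S * (C S - real (n div (d * \<Prod>S)) / d))"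
    by (simp add: div_mult2_eq right_diff_distrib sum_subtractf)
  also have "\<bar>\<dots>\<bar> \<le> (\<Sum>S\<in>?P. \<bar>C S - real (n div (d * \<Prod>S)) / d\<bar>)"
    by (rule order_trans[OF sum_abs]) (simp add: abs_mult)
  also have "\<dots> \<le> (\<Sum>S\<in>?P. E)"
  proof (rule sum_mono)
    fix S assume "S \<in> ?P"
    hence "\<Prod>S dvd n div d" using prod_subset_prime_factors[OF \<open>n div d > 0\<close>] by blast
    moreover have "d \<noteq> 0" using \<open>n div d > 0\<close> by (auto intro!: gr0I)
    ultimately have "d * \<Prod>S dvd p - 1"
      using assms(3) by (simp add: n_def dvd_div_iff_mult mult.commute)
    thus "\<bar>C S - real (n div (d * \<Prod>S)) / d\<bar> \<le> E"
      unfolding C_def E_def n_def by (rule card_progression_inter_unit_roots[OF assms])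
  qed
  also have "\<dots> = card ?P * E" by simp
  also have "\<dots> \<le> num_divisors n * E"
  proof (rule mult_right_mono)
    have "n div d dvd n" using assms(3) by (metis n_def dvd_div_mult_self dvd_triv_left)
    thus "real (card ?P) \<le> num_divisors n" using card_Pow_prime_factors_le \<open>n > 0\<close> by simp
    show "0 \<le> E" using prime_gt_1_nat[OF assms(1)] by (simp add: E_def)
  qed
  finally show ?thesis by (simp add: n_def E_def)
qed

lemma G_any_any_eq_sum_G_gcd_class:
  fixes p :: nat
  assumes "prime p"
  shows "G_any_any p = (\<Sum>d | d dvd p - 1. card (G_gcd_class p d))"
proof -
  define A where "A = {h \<in> {1..<p}. h \<in> unit_roots p ((p - 1) div gcd h (p - 1))}"
  have interval: "{1..p - 1} = {1..<p}" using prime_gt_1_nat[OF assms] by auto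
  have "{h \<in> {1..<p}. \<exists>g\<in>{1..<p}. [g ^ h = h] (mod p)} = A"
    unfolding A_def by (rule Collect_cong) (use ex_power_cong_self_iff[OF assms] in blast)
  hence "G_any_any p = card A" by (simp only: G_any_any_def interval)
  also have "\<dots> = (\<Sum>d | d dvd p - 1. card {h. h \<in> A \<and> gcd h (p - 1) = d})"
  proof -
    have "finite A" "finite {d. d dvd p - 1}" using prime_gt_1_nat[OF assms] by (simp_all add: A_def)
    moreover have "(\<lambda>h. gcd h (p - 1)) ` A \<subseteq> {d. d dvd p - 1}" by auto
    ultimately show ?thesis using sum.group[of A _ "\<lambda>h. gcd h (p - 1)" "\<lambda>_. 1 :: nat"] by simp
  qed
  also have "\<dots> = (\<Sum>d | d dvd p - 1. card (G_gcd_class p d))"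
    by (intro sum.cong refl arg_cong[where f = card]) (auto simp: A_def G_gcd_class_def interval)
  finally show ?thesis .
qed

theorem mainTheorem4:
  fixes p :: nat
  assumes "prime p" and "odd p"
  shows "\<bar>real (G_any_any p) - (\<Sum>e | e dvd (p - 1). (1 / real e) * real (totient ((p - 1) div e)))\<bar>
           \<le> real (num_divisors (p - 1)) ^ 2 * sqrt (real p) * (1 + ln (real p))"
proof -
  let ?D = "{d. d dvd p - 1}"
  have "\<bar>real (G_any_any p) - (\<Sum>e\<in>?D. 1 / e * totient ((p - 1) div e))\<bar>
      = \<bar>\<Sum>d\<in>?D. card (G_gcd_class p d) - 1 / d * totient ((p - 1) div d)\<bar>"
    by (simp add: G_any_any_eq_sum_G_gcd_class[OF assms(1)] sum_subtractf)
  also have "\<dots> \<le> (\<Sum>d\<in>?D. \<bar>card (G_gcd_class p d) - 1 / d * totient ((p - 1) div d)\<bar>)"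
    by (rule sum_abs)
  also have "\<dots> \<le> (\<Sum>d\<in>?D. num_divisors (p - 1) * (sqrt p * (1 + ln p)))"
    by (intro sum_mono card_G_gcd_class_approx[OF assms]) simp
  also have "\<dots> = real (num_divisors (p - 1)) ^ 2 * sqrt p * (1 + ln p)"
    by (simp add: num_divisors_def power2_eq_square)
  finally show ?thesis .
qed

end
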